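(* Assume bifurcation assumption (B) with non-critical maximal cells, fix a root subnetwork $B$, and let $p\in C\setminus B$ be non-maximal and non-critical. Assume hypothesis (H) at $p$, and assume (L) if $\Xi_p=0$, resp. (SN) if $\Xi_p>0$. Then the $p$-th bifurcation equation has a unique solution near $0$, $$x_p(\lambda)=d_p\lambda^{2^{-\Xi_p}}+O\bigl(|\lambda|^{2^{-(\Xi_p-1)}}\bigr)\quad\text{for small }\lambda>0,$$ where $d_p\neq0$ is given by $d_p=-\bigl(\sum_{\tau\notin\mathcal L_p}a_\tau d_{\tau(p)}+\ell\bigr)/\sum_{\sigma\in\mathcal L_p}a_\sigma$ if $\Xi_p=0$, and $d_p=-\bigl(\sum_{\tau:\tau(p)\in Q_p}a_\tau d_{\tau(p)}\bigr)/\sum_{\sigma\in\mathcal L_p}a_\sigma$ if $\Xi_p>0$.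
   Context: Network: finite cells $C$, pairwise distinct maps $\Sigma=\{\sigma_1,\dots,\sigma_n\}$, $\sigma_i\colon C\to C$, $\sigma_1=\mathrm{Id}_C$; feedforward (no cycles of length $\ge 2$); $p\trianglelefteq q$ iff there is a path from $q$ to $p$ (partial order), $q\vartriangleright p$ iff $p\trianglelefteq q$, $p\neq q$; maximal cells have $\sigma(p)=p$ for all $\sigma$. $\Sigma(p)=\{\sigma(p):\sigma\in\Sigma\}$, $\Sigma^\star(p)=\Sigma(p)\setminus\{p\}$. Bifurcation setting: $V=\mathbb R$, smooth $f\colon\mathbb R^n\times\mathbb R\to\mathbb R$ with first $n$ arguments labelled by $\Sigma$, $\gamma_f(x,\lambda)_p=f(x_{\sigma_1(p)},\dots,x_{\sigma_n(p)},\lambda)$; the $p$-th bifurcation equation $\gamma_f(x,\lambda)_p=0$ is solved for $x_p$ near 0 given $x_q(\lambda)$ for $q\vartriangleright p$. $a_\sigma=\partial_\sigma f(0,0)$, $\ell=\partial_\lambda f(0,0)$. $\mathcal L_p=\{\sigma:\sigma(p)=p\}$; $p$ critical iff $\sum_{\sigma\in\mathcal L_p}a_\sigma=0$. (B): $f(0,0)=0$, some cell critical, exactly the cells sharing $\mathcal L_p$ with a critical cell are critical. Root subnetwork: a subnetwork ($\sigma(B)\subset B$ for all $\sigma$) $\emptyset\ne B\subsetneq C$ containing all maximal cells such that every $p\notin B$ with all $q\vartriangleright p$ in $B$ is critical. Hypothesis (H) at $p$: for all $q\vartriangleright p$ and small $\lambda>0$, $x_q(\lambda)=d_q\lambda^{2^{-\xi_q}}+O(|\lambda|^{2^{-(\xi_q-1)}})$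 with $d_q\ne0$ and integers $\xi_q\ge0$. Then $\Xi_p=\max_{q\in\Sigma^\star(p)}\xi_q$ and $Q_p=\{q\in\Sigma^\star(p):\xi_q=\Xi_p\}$. Condition (L): $\Xi_p=0$ and $\sum_{\tau\notin\mathcal L_p}a_\tau d_{\tau(p)}+\ell\ne0$. Condition (SN): $\Xi_p>0$ and $\sum_{\tau:\tau(p)\in Q_p}a_\tau d_{\tau(p)}\ne0$. *)

theory Defs
  imports "HOL-Analysis.Analysis" "HOL-Library.Landau_Symbols"
begin

text \<open>Iterated partial derivatives along basis directions (innermost derivative
  is the last list element).\<close>
fun pderivs :: "('a::euclidean_space \<Rightarrow> real) \<Rightarrow> 'a list \<Rightarrow> 'a \<Rightarrow> real" where
  "pderivs g [] = g"
| "pderivs g (b # bs) = (\<lambda>x. deriv (\<lambda>t. pderivs g bs (x + t *\<^sub>R b)) 0)"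

definition smooth_fun :: "('a::euclidean_space \<Rightarrow> real) \<Rightarrow> bool" where
  "smooth_fun g \<longleftrightarrow> continuous_on UNIV g \<and>
     (\<forall>bs b x. set bs \<subseteq> Basis \<longrightarrow> b \<in> Basis \<longrightarrow>
        ((\<lambda>t. pderivs g bs (x + t *\<^sub>R b)) has_real_derivative pderivs g (b # bs) x) (at 0)) \<and>
     (\<forall>bs. set bs \<subseteq> Basis \<longrightarrow> continuous_on UNIV (pderivs g bs))"

text \<open>Cells form the finite type \<open>'c\<close>; the maps of \<Sigma> are indexed by the finite
  type \<open>'s\<close> via \<open>sig\<close>.\<close>

definition edges :: "('s \<Rightarrow> 'c \<Rightarrow> 'c) \<Rightarrow> ('c \<times> 'c) set" where
  "edges sig = {(sig s p, p) | s p. sig s p \<noteq> p}"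

definition network :: "('s::finite \<Rightarrow> 'c::finite \<Rightarrow> 'c) \<Rightarrow> bool" where
  "network sig \<longleftrightarrow> inj sig \<and> (\<exists>s. sig s = id)"

text \<open>Feedforward: no cycles of length at least 2 (self-loops are allowed).\<close>
definition feedforward :: "('s \<Rightarrow> 'c \<Rightarrow> 'c) \<Rightarrow> bool" where
  "feedforward sig \<longleftrightarrow> acyclic (edges sig)"

text \<open>\<open>below sig p q\<close>: p \<unlhd> q, i.e. there is a path from q to p.\<close>
definition below :: "('s \<Rightarrow> 'c \<Rightarrow> 'c) \<Rightarrow> 'c \<Rightarrow> 'c \<Rightarrow> bool" where
  "below sig p q \<longleftrightarrow> (q, p) \<in> (edges sig)\<^sup>*"

definition above :: "('s \<Rightarrow> 'c \<Rightarrow> 'c) \<Rightarrow> 'c \<Rightarrow> 'c \<Rightarrow> bool" where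
  "above sig q p \<longleftrightarrow> below sig p q \<and> p \<noteq> q"

definition maximal :: "('s \<Rightarrow> 'c \<Rightarrow> 'c) \<Rightarrow> 'c \<Rightarrow> bool" where
  "maximal sig p \<longleftrightarrow> (\<nexists>q. above sig q p)"

definition Sig_img :: "('s \<Rightarrow> 'c \<Rightarrow> 'c) \<Rightarrow> 'c \<Rightarrow> 'c set" where
  "Sig_img sig p = {sig s p | s. True}"

definition Sig_star :: "('s \<Rightarrow> 'c \<Rightarrow> 'c) \<Rightarrow> 'c \<Rightarrow> 'c set" where
  "Sig_star sig p = Sig_img sig p - {p}"

definition Lp :: "('s \<Rightarrow> 'c \<Rightarrow> 'c) \<Rightarrow> 'c \<Rightarrow> 's set" where
  "Lp sig p = {s. sig s p = p}"

definition subnetwork :: "('s \<Rightarrow> 'c \<Rightarrow> 'c) \<Rightarrow> 'c set \<Rightarrow> bool" where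
  "subnetwork sig B \<longleftrightarrow> (\<forall>s. sig s ` B \<subseteq> B)"

definition gamma :: "('s \<Rightarrow> 'c \<Rightarrow> 'c) \<Rightarrow> (real^'s \<Rightarrow> real \<Rightarrow> real) \<Rightarrow> ('c \<Rightarrow> real) \<Rightarrow> real \<Rightarrow> 'c \<Rightarrow> real" where
  "gamma sig f x lam p = f (\<chi> s. x (sig s p)) lam"

definition acoef :: "(real^'s \<Rightarrow> real \<Rightarrow> real) \<Rightarrow> 's \<Rightarrow> real" where
  "acoef f s = deriv (\<lambda>t. f (axis s t) 0) 0"

definition lcoef :: "(real^'s \<Rightarrow> real \<Rightarrow> real) \<Rightarrow> real" where
  "lcoef f = deriv (\<lambda>t. f 0 t) 0"

definition critical :: "('s \<Rightarrow> 'c \<Rightarrow> 'c) \<Rightarrow> (real^'s \<Rightarrow> real \<Rightarrow> real) \<Rightarrow> 'c \<Rightarrow> bool" where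
  "critical sig f p \<longleftrightarrow> (\<Sum>s\<in>Lp sig p. acoef f s) = 0"

definition assumption_B :: "('s \<Rightarrow> 'c \<Rightarrow> 'c) \<Rightarrow> (real^'s \<Rightarrow> real \<Rightarrow> real) \<Rightarrow> bool" where
  "assumption_B sig f \<longleftrightarrow> f 0 0 = 0 \<and> (\<exists>p. critical sig f p) \<and>
     (\<forall>q. critical sig f q \<longleftrightarrow> (\<exists>p. critical sig f p \<and> Lp sig q = Lp sig p))"

definition root_subnetwork :: "('s \<Rightarrow> 'c \<Rightarrow> 'c) \<Rightarrow> (real^'s \<Rightarrow> real \<Rightarrow> real) \<Rightarrow> 'c set \<Rightarrow> bool" where
  "root_subnetwork sig f B \<longleftrightarrow> subnetwork sig B \<and> B \<noteq> {} \<and> B \<noteq> UNIV \<and>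
     (\<forall>p. maximal sig p \<longrightarrow> p \<in> B) \<and>
     (\<forall>p. p \<notin> B \<longrightarrow> (\<forall>q. above sig q p \<longrightarrow> q \<in> B) \<longrightarrow> critical sig f p)"

definition has_expansion :: "(real \<Rightarrow> real) \<Rightarrow> real \<Rightarrow> nat \<Rightarrow> bool" where
  "has_expansion x d \<xi> \<longleftrightarrow>
     (\<lambda>lam. x lam - d * lam powr (2 powr (- real \<xi>)))
       \<in> O[at_right 0](\<lambda>lam. \<bar>lam\<bar> powr (2 powr (- (real \<xi> - 1))))"

definition hyp_H :: "('s \<Rightarrow> 'c \<Rightarrow> 'c) \<Rightarrow> 'c \<Rightarrow> ('c \<Rightarrow> real \<Rightarrow> real) \<Rightarrow> ('c \<Rightarrow> real) \<Rightarrow> ('c \<Rightarrow> nat) \<Rightarrow> bool" where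
  "hyp_H sig p x d \<xi> \<longleftrightarrow> (\<forall>q. above sig q p \<longrightarrow> d q \<noteq> 0 \<and> has_expansion (x q) (d q) (\<xi> q))"

definition Xi :: "('s \<Rightarrow> 'c \<Rightarrow> 'c) \<Rightarrow> ('c \<Rightarrow> nat) \<Rightarrow> 'c \<Rightarrow> nat" where
  "Xi sig \<xi> p = Max (\<xi> ` Sig_star sig p)"

definition Qset :: "('s \<Rightarrow> 'c \<Rightarrow> 'c) \<Rightarrow> ('c \<Rightarrow> nat) \<Rightarrow> 'c \<Rightarrow> 'c set" where
  "Qset sig \<xi> p = {q \<in> Sig_star sig p. \<xi> q = Xi sig \<xi> p}"

definition cond_L :: "('s \<Rightarrow> 'c \<Rightarrow> 'c) \<Rightarrow> (real^'s \<Rightarrow> real \<Rightarrow> real) \<Rightarrow> ('c \<Rightarrow> real) \<Rightarrow> ('c \<Rightarrow> nat) \<Rightarrow> 'c \<Rightarrow> bool" where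
  "cond_L sig f d \<xi> p \<longleftrightarrow> Xi sig \<xi> p = 0 \<and>
     (\<Sum>t\<in>- Lp sig p. acoef f t * d (sig t p)) + lcoef f \<noteq> 0"

definition cond_SN :: "('s \<Rightarrow> 'c \<Rightarrow> 'c) \<Rightarrow> (real^'s \<Rightarrow> real \<Rightarrow> real) \<Rightarrow> ('c \<Rightarrow> real) \<Rightarrow> ('c \<Rightarrow> nat) \<Rightarrow> 'c \<Rightarrow> bool" where
  "cond_SN sig f d \<xi> p \<longleftrightarrow> Xi sig \<xi> p > 0 \<and>
     (\<Sum>t\<in>{t. sig t p \<in> Qset sig \<xi> p}. acoef f t * d (sig t p)) \<noteq> 0"

end

theory Submission
  imports Defs
begin

text \<open>
  Freeze the values \<open>x\<^sub>q(\<lambda>)\<close> of all cells other than \<open>p\<close>. Then the \<open>p\<close>-th bifurcation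
  equation is a scalar equation \<open>\<phi>\<^sub>\<lambda>(y) = 0\<close>, and Taylor's theorem for \<open>f\<close> gives
  \<open>\<phi>\<^sub>\<lambda>(y) = A y + c(\<lambda>)\<close> up to an error quadratic in the size of the input of \<open>f\<close>. Here
  \<open>A\<close> is the sum of the \<open>a\<^sub>\<sigma>\<close> over \<open>\<sigma> \<in> L\<^sub>p\<close>, nonzero because \<open>p\<close> is not critical, and
  \<open>c(\<lambda>)\<close> is the linear drive \<open>\<Sum> a\<^sub>\<tau> x\<^sub>\<tau>\<^sub>(\<^sub>p\<^sub>)(\<lambda>) + \<ell>\<lambda>\<close> over \<open>\<tau> \<notin> L\<^sub>p\<close>.
  A perturbation of a linear map of slope \<open>A\<close> by a map of Lipschitz constant small compared
  to \<open>\<bar>A\<bar>\<close> has exactly one small zero, and it lies within \<open>2\<bar>\<phi>\<^sub>\<lambda>(0)\<bar>/\<bar>A\<bar>\<close> of \<open>0\<close>;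
  feeding this bound back into the quadratic error shows that the zero is \<open>-c(\<lambda>)/A\<close> up to
  \<open>O(\<lambda>\<^bsup>2h\<^esup>)\<close>, where \<open>h = 2\<^bsup>-\<Xi>\<^sub>p\<^esup>\<close>. By (H), only the neighbours with \<open>\<xi>\<^sub>q = \<Xi>\<^sub>p\<close>, and
  \<open>\<ell>\<lambda>\<close> if \<open>\<Xi>\<^sub>p = 0\<close>, contribute to \<open>c(\<lambda>)\<close> at order \<open>\<lambda>\<^bsup>h\<^esup>\<close>; this gives \<open>d\<^sub>p\<close>, and (L)
  resp. (SN) say exactly that its numerator does not vanish.
\<close>

definition cube :: "real \<Rightarrow> 'a::euclidean_space set" where
  "cube \<rho> = {x. \<forall>b\<in>Basis. \<bar>x \<bullet> b\<bar> \<le> \<rho>}"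

definition norm1 :: "'a::euclidean_space \<Rightarrow> real" where
  "norm1 x = (\<Sum>b\<in>Basis. \<bar>x \<bullet> b\<bar>)"

lemma cube_eq_cbox: "cube \<rho> = cbox (- (\<rho> *\<^sub>R One)) (\<rho> *\<^sub>R One)"
  unfolding cube_def cbox_def by (auto simp: inner_minus_left abs_le_iff)

lemma convex_cube: "convex (cube \<rho>)"
  by (simp add: cube_eq_cbox convex_box)

lemma compact_cube: "compact (cube \<rho>)"
  by (simp add: cube_eq_cbox)

lemma cube_mono: "\<rho> \<le> r \<Longrightarrow> x \<in> cube \<rho> \<Longrightarrow> x \<in> cube r"
  unfolding cube_def by fastforce

lemma norm1_nonneg: "0 \<le> norm1 x"
  unfolding norm1_def by (simp add: sum_nonneg)

lemma norm1_le_if_in_cube: "x \<in> cube \<rho> \<Longrightarrow> norm1 x \<le> real DIM('a) * \<rho>"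
  for x :: "'a::euclidean_space"
proof -
  assume "x \<in> cube \<rho>"
  then have "norm1 x \<le> (\<Sum>b\<in>(Basis::'a set). \<rho>)"
    unfolding norm1_def cube_def by (intro sum_mono) auto
  then show ?thesis by simp
qed

lemma in_cube_if_norm1_le: "norm1 x \<le> \<rho> \<Longrightarrow> x \<in> cube \<rho>"
  unfolding cube_def norm1_def
  by (auto intro: order_trans[OF member_le_sum[of _ Basis "\<lambda>b. \<bar>x \<bullet> b\<bar>"]])

section \<open>Linearization error of smooth functions\<close>

lemma abs_diff_le_along_direction:
  fixes h :: "'a::real_normed_vector \<Rightarrow> real"
  assumes deriv: "\<And>x. ((\<lambda>t. h (x + t *\<^sub>R b)) has_real_derivative Q x) (at 0)"
    and bound: "\<And>t. 0 \<le> t \<Longrightarrow> t \<le> 1 \<Longrightarrow> \<bar>Q (v + (t * \<delta>) *\<^sub>R b)\<bar> \<le> M"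
  shows "\<bar>h (v + \<delta> *\<^sub>R b) - h v\<bar> \<le> M * \<bar>\<delta>\<bar>"
proof -
  have line: "((\<lambda>s. h (v + s *\<^sub>R b)) has_real_derivative Q (v + s *\<^sub>R b)) (at s)" for s
    using deriv[of "v + s *\<^sub>R b"] DERIV_shift[of "\<lambda>s. h (v + s *\<^sub>R b)" _ 0 s]
    by (simp add: algebra_simps)
  have "((\<lambda>t. h (v + (t * \<delta>) *\<^sub>R b)) has_real_derivative Q (v + (t * \<delta>) *\<^sub>R b) * \<delta>) (at t)" for t
    by (rule DERIV_chain2[OF line]) (auto intro!: derivative_eq_intros)
  then obtain t where t: "0 < t" "t < 1"
    and mvt: "h (v + \<delta> *\<^sub>R b) - h v = Q (v + (t * \<delta>) *\<^sub>R b) * \<delta>"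
    using MVT2[of 0 1 "\<lambda>t. h (v + (t * \<delta>) *\<^sub>R b)" "\<lambda>t. Q (v + (t * \<delta>) *\<^sub>R b) * \<delta>"]
    by auto
  show ?thesis
    unfolding mvt abs_mult using bound[of t] t by (simp add: mult_right_mono)
qed

lemma abs_diff_le_norm1_on_cube:
  fixes h :: "'a::euclidean_space \<Rightarrow> real"
  assumes deriv: "\<And>b x. b \<in> Basis \<Longrightarrow> ((\<lambda>t. h (x + t *\<^sub>R b)) has_real_derivative Q b x) (at 0)"
    and bound: "\<And>b x. b \<in> Basis \<Longrightarrow> x \<in> cube \<rho> \<Longrightarrow> \<bar>Q b x\<bar> \<le> M"
    and u: "u \<in> cube \<rho>" and v: "v \<in> cube \<rho>"
  shows "\<bar>h u - h v\<bar> \<le> M * norm1 (u - v)"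
proof -
  \<comment> \<open>Move from \<open>v\<close> to \<open>u\<close> one coordinate at a time, staying inside the cube.\<close>
  have "\<bar>h u - h v\<bar> \<le> M * (\<Sum>b\<in>F. \<bar>(u - v) \<bullet> b\<bar>)"
    if "finite F" "F \<subseteq> Basis" "u \<in> cube \<rho>" "\<forall>b\<in>Basis - F. u \<bullet> b = v \<bullet> b" for F u
    using that
  proof (induction F arbitrary: u rule: finite_induct)
    case empty
    then have "u = v" by (metis Diff_empty euclidean_eqI)
    then show ?case by simp
  next
    case (insert b F)
    have b: "b \<in> Basis" using insert.prems by simp
    define \<delta> where "\<delta> = (u - v) \<bullet> b"
    define w where "w = u - \<delta> *\<^sub>R b"
    have w_coord: "w \<bullet> c = (if c = b then v \<bullet> b else u \<bullet> c)" if "c \<in> Basis" for c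
      using that b by (auto simp: w_def \<delta>_def inner_diff_left inner_Basis)
    have w: "w \<in> cube \<rho>"
      using insert.prems v w_coord unfolding cube_def by auto
    have IH: "\<bar>h w - h v\<bar> \<le> M * (\<Sum>c\<in>F. \<bar>(w - v) \<bullet> c\<bar>)"
      using insert.prems w_coord by (intro insert.IH w) auto
    have "(\<Sum>c\<in>F. \<bar>(w - v) \<bullet> c\<bar>) = (\<Sum>c\<in>F. \<bar>(u - v) \<bullet> c\<bar>)"
      using insert.hyps insert.prems w_coord by (intro sum.cong) (auto simp: inner_diff_left)
    moreover have "\<bar>h (w + \<delta> *\<^sub>R b) - h w\<bar> \<le> M * \<bar>\<delta>\<bar>"
    proof (rule abs_diff_le_along_direction[where Q = "Q b"])
      fix t :: real assume "0 \<le> t" "t \<le> 1"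
      then have "(1 - t) *\<^sub>R w + t *\<^sub>R u \<in> cube \<rho>"
        using convex_cube w insert.prems by (intro convexD) auto
      moreover have "(1 - t) *\<^sub>R w + t *\<^sub>R u = w + (t * \<delta>) *\<^sub>R b"
        by (simp add: w_def algebra_simps)
      ultimately show "\<bar>Q b (w + (t * \<delta>) *\<^sub>R b)\<bar> \<le> M" using bound[OF b] by simp
    qed (rule deriv[OF b])
    ultimately show ?case
      using IH insert.hyps by (simp add: w_def \<delta>_def algebra_simps)
  qed
  from this[of Basis u] show ?thesis
    using u unfolding norm1_def by simp
qed

definition diff_at_0 :: "('a::euclidean_space \<Rightarrow> real) \<Rightarrow> 'a \<Rightarrow> real" where
  "diff_at_0 g x = (\<Sum>b\<in>Basis. (x \<bullet> b) * pderivs g [b] 0)"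

lemma diff_at_0_zero [simp]: "diff_at_0 g 0 = 0"
  by (simp add: diff_at_0_def)

lemma diff_at_0_add_scaleR_Basis:
  fixes g :: "'a::euclidean_space \<Rightarrow> real"
  assumes b: "b \<in> Basis"
  shows "diff_at_0 g (x + t *\<^sub>R b) = diff_at_0 g x + t * pderivs g [b] 0"
proof -
  have "diff_at_0 g (x + t *\<^sub>R b) = diff_at_0 g x + t * (\<Sum>c\<in>Basis. (b \<bullet> c) * pderivs g [c] 0)"
    by (simp add: diff_at_0_def inner_add_left algebra_simps sum.distrib sum_distrib_left)
  also have "(\<Sum>c\<in>Basis. (b \<bullet> c) * pderivs g [c] 0) = (\<Sum>c\<in>Basis. if c = b then pderivs g [c] 0 else 0)"
    using b by (intro sum.cong) (auto simp: inner_Basis simp del: pderivs.simps)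
  also have "\<dots> = pderivs g [b] 0"
    using b by (simp del: pderivs.simps)
  finally show ?thesis .
qed

lemma smooth_fun_has_partial_derivative:
  assumes "smooth_fun g" "set bs \<subseteq> Basis" "b \<in> Basis"
  shows "((\<lambda>t. pderivs g bs (x + t *\<^sub>R b)) has_real_derivative pderivs g (b # bs) x) (at 0)"
  using assms unfolding smooth_fun_def by blast

lemma smooth_fun_continuous_pderivs:
  assumes "smooth_fun g" "set bs \<subseteq> Basis"
  shows "continuous_on UNIV (pderivs g bs)"
  using assms unfolding smooth_fun_def by blast

lemma smooth_fun_linearization_error:
  fixes g :: "'a::euclidean_space \<Rightarrow> real"
  assumes g: "smooth_fun g"
  obtains K where "K \<ge> 0" and "\<And>\<rho> u v. \<rho> \<le> 1 \<Longrightarrow> u \<in> cube \<rho> \<Longrightarrow> v \<in> cube \<rho> \<Longrightarrow>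
     \<bar>(g u - diff_at_0 g u) - (g v - diff_at_0 g v)\<bar> \<le> K * \<rho> * norm1 (u - v)"
proof -
  define \<Phi> where "\<Phi> x = (\<Sum>b\<in>(Basis::'a set). \<Sum>c\<in>(Basis::'a set). \<bar>pderivs g [c, b] x\<bar>)" for x
  have "continuous_on (cube 1) \<Phi>"
    unfolding \<Phi>_def
    by (intro continuous_intros continuous_on_subset[OF smooth_fun_continuous_pderivs[OF g]]) auto
  then obtain M where M: "M \<ge> 0" "\<And>x. x \<in> cube 1 \<Longrightarrow> norm (\<Phi> x) \<le> M"
    using continuous_on_compact_bound[OF compact_cube] by metis
  have second: "\<bar>pderivs g [c, b] x\<bar> \<le> M" if "b \<in> Basis" "c \<in> Basis" "x \<in> cube 1" for b c x
  proof -
    have "\<bar>pderivs g [c, b] x\<bar> \<le> (\<Sum>c\<in>(Basis::'a set). \<bar>pderivs g [c, b] x\<bar>)"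
      using that by (intro member_le_sum) auto
    also have "\<dots> \<le> \<Phi> x"
      unfolding \<Phi>_def using that
      by (intro member_le_sum[where f = "\<lambda>b. \<Sum>c\<in>Basis. \<bar>pderivs g [c, b] x\<bar>"]) (auto intro: sum_nonneg)
    also have "\<dots> \<le> M" using M(2)[OF that(3)] by simp
    finally show ?thesis .
  qed
  \<comment> \<open>The second derivatives bound how far the partials of \<open>g\<close> on \<open>cube \<rho>\<close> stray from their
    values at \<open>0\<close>, i.e. the partials of \<open>g - diff_at_0 g\<close>.\<close>
  have first: "\<bar>pderivs g [b] x - pderivs g [b] 0\<bar> \<le> M * real DIM('a) * \<rho>"
    if "b \<in> Basis" "\<rho> \<le> 1" "x \<in> cube \<rho>" for b x \<rho>
  proof -
    have "0 \<in> cube \<rho>" "x \<in> cube 1"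
      using that cube_mono[OF _ that(3)] unfolding cube_def by fastforce+
    then have "\<bar>pderivs g [b] x - pderivs g [b] 0\<bar> \<le> M * norm1 (x - 0)"
      using that smooth_fun_has_partial_derivative[OF g, of "[b]"]
      by (intro abs_diff_le_norm1_on_cube[where Q = "\<lambda>c. pderivs g [c, b]" and \<rho> = 1] second)
        (auto simp: cube_def)
    also have "\<dots> \<le> M * (real DIM('a) * \<rho>)"
      using norm1_le_if_in_cube[OF that(3)] M(1) by (simp add: mult_left_mono)
    finally show ?thesis by (simp add: mult.assoc)
  qed
  show ?thesis
  proof (rule that[of "M * real DIM('a)"])
    show "M * real DIM('a) \<ge> 0" using M(1) by simp
    fix \<rho> and u v :: 'a
    assume "\<rho> \<le> 1" "u \<in> cube \<rho>" "v \<in> cube \<rho>"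
    then show "\<bar>(g u - diff_at_0 g u) - (g v - diff_at_0 g v)\<bar> \<le> M * real DIM('a) * \<rho> * norm1 (u - v)"
      using first smooth_fun_has_partial_derivative[OF g, of "[]"]
      by (intro abs_diff_le_norm1_on_cube[where Q = "\<lambda>b x. pderivs g [b] x - pderivs g [b] 0"])
        (auto simp: diff_at_0_add_scaleR_Basis intro!: derivative_eq_intros)
  qed
qed

section \<open>Zeros of perturbed linear families\<close>

lemma quasi_linear_unique_zero:
  fixes \<phi> :: "real \<Rightarrow> real"
  assumes A: "A \<noteq> 0" and cont: "continuous_on {-\<epsilon>..\<epsilon>} \<phi>"
    and near_linear: "\<And>y1 y2. \<bar>y1\<bar> \<le> \<epsilon> \<Longrightarrow> \<bar>y2\<bar> \<le> \<epsilon> \<Longrightarrow>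
        \<bar>\<phi> y1 - \<phi> y2 - A * (y1 - y2)\<bar> \<le> \<bar>A\<bar> / 2 * \<bar>y1 - y2\<bar>"
    and small: "\<bar>\<phi> 0\<bar> < \<bar>A\<bar> * \<epsilon> / 2"
  shows "\<exists>!y. \<bar>y\<bar> \<le> \<epsilon> \<and> \<phi> y = 0"
proof (rule ex_ex1I)
  have "0 < \<bar>A\<bar> * \<epsilon>" using small abs_ge_zero[of "\<phi> 0"] by linarith
  then have \<epsilon>: "0 < \<epsilon>" by (simp add: zero_less_mult_iff)
  have right: "\<bar>\<phi> \<epsilon> - \<phi> 0 - A * \<epsilon>\<bar> \<le> \<bar>A\<bar> * \<epsilon> / 2"
    using near_linear[of \<epsilon> 0] \<epsilon> by simp
  have left: "\<bar>\<phi> (-\<epsilon>) - \<phi> 0 + A * \<epsilon>\<bar> \<le> \<bar>A\<bar> * \<epsilon> / 2"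
    using near_linear[of "-\<epsilon>" 0] \<epsilon> by simp
  have "\<exists>y. -\<epsilon> \<le> y \<and> y \<le> \<epsilon> \<and> \<phi> y = 0"
  proof (cases "A > 0")
    case True
    then have "\<phi> (-\<epsilon>) \<le> 0" "0 \<le> \<phi> \<epsilon>" using left right small by (simp_all add: abs_of_pos) (smt (verit))+
    then show ?thesis using IVT'[OF _ _ _ cont] \<epsilon> by simp
  next
    case False
    then have "A < 0" using A by simp
    then have "\<phi> \<epsilon> \<le> 0" "0 \<le> \<phi> (-\<epsilon>)" using left right small by (simp_all add: abs_of_neg)
    then show ?thesis using IVT2'[OF _ _ _ cont] \<epsilon> by simp
  qed
  then show "\<exists>y. \<bar>y\<bar> \<le> \<epsilon> \<and> \<phi> y = 0" by (auto simp: abs_le_iff)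
next
  fix y1 y2 assume "\<bar>y1\<bar> \<le> \<epsilon> \<and> \<phi> y1 = 0" "\<bar>y2\<bar> \<le> \<epsilon> \<and> \<phi> y2 = 0"
  then have "\<bar>A\<bar> * \<bar>y1 - y2\<bar> \<le> \<bar>A\<bar> / 2 * \<bar>y1 - y2\<bar>"
    using near_linear[of y1 y2] by (simp add: abs_mult)
  then show "y1 = y2" using A by (simp add: mult_le_cancel_right)
qed

lemma powr_bigo_powr_at_right_0:
  "a \<le> b \<Longrightarrow> (\<lambda>l::real. l powr b) \<in> O[at_right 0](\<lambda>l. l powr a)"
  by (intro bigoI[where c = 1])
    (auto simp: eventually_at_right_field intro!: exI[of _ 1] powr_mono')

lemma tendsto_powr_at_right_0: "h > 0 \<Longrightarrow> ((\<lambda>l::real. l powr h) \<longlongrightarrow> 0) (at_right 0)"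
  by (rule tendsto_eq_intros) (auto simp: eventually_at_right_field intro: exI[of _ 1])

lemma bigo_tendsto_zero:
  fixes f g :: "'a \<Rightarrow> real"
  assumes "f \<in> O[F](g)" "(g \<longlongrightarrow> 0) F"
  shows "(f \<longlongrightarrow> 0) F"
proof -
  obtain c where "eventually (\<lambda>x. norm (f x) \<le> c * norm (g x)) F"
    using assms(1) by (elim landau_o.bigE)
  moreover have "((\<lambda>x. c * norm (g x)) \<longlongrightarrow> 0) F"
    using tendsto_mult_right_zero[OF tendsto_norm_zero[OF assms(2)]] .
  ultimately show ?thesis by (rule Lim_null_comparison)
qed

lemma perturbed_linear_family_small_zero:
  fixes \<phi> :: "real \<Rightarrow> real \<Rightarrow> real" and m :: "real \<Rightarrow> real"
  assumes A: "A \<noteq> 0" and K: "K \<ge> 0"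
    and near_linear: "\<And>l \<rho> y1 y2. m l \<le> \<rho> \<Longrightarrow> \<rho> \<le> 1 \<Longrightarrow> \<bar>y1\<bar> \<le> \<rho> \<Longrightarrow> \<bar>y2\<bar> \<le> \<rho> \<Longrightarrow>
        \<bar>\<phi> l y1 - \<phi> l y2 - A * (y1 - y2)\<bar> \<le> K * \<rho> * \<bar>y1 - y2\<bar>"
    and cont: "\<And>l. continuous_on UNIV (\<phi> l)"
    and m_lim: "(m \<longlongrightarrow> 0) (at_right 0)"
    and \<phi>0_lim: "((\<lambda>l. \<phi> l 0) \<longlongrightarrow> 0) (at_right 0)"
  obtains \<epsilon> \<delta> xp where "0 < \<epsilon>" "\<epsilon> \<le> 1/2" "0 < \<delta>"
    and "\<And>l. 0 < l \<Longrightarrow> l < \<delta> \<Longrightarrow> m l < \<epsilon>"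
    and "\<And>l. 0 < l \<Longrightarrow> l < \<delta> \<Longrightarrow> \<bar>xp l\<bar> < \<epsilon>"
    and "\<And>l. 0 < l \<Longrightarrow> l < \<delta> \<Longrightarrow> \<phi> l (xp l) = 0"
    and "\<And>l y. 0 < l \<Longrightarrow> l < \<delta> \<Longrightarrow> \<bar>y\<bar> < \<epsilon> \<Longrightarrow> \<phi> l y = 0 \<Longrightarrow> y = xp l"
    and "\<And>l. 0 < l \<Longrightarrow> l < \<delta> \<Longrightarrow> \<bar>xp l\<bar> \<le> 2 / \<bar>A\<bar> * \<bar>\<phi> l 0\<bar>"
proof -
  define \<epsilon> where "\<epsilon> = min (1/2) (\<bar>A\<bar> / (2 * (K + 1)))"
  have "0 < \<epsilon>" using A K unfolding \<epsilon>_def by simp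
  moreover have "\<epsilon> \<le> 1/2" unfolding \<epsilon>_def by (rule min.cobounded1)
  ultimately have \<epsilon>: "0 < \<epsilon>" "\<epsilon> \<le> 1/2" .
  have K\<epsilon>: "K * \<epsilon> \<le> \<bar>A\<bar> / 2"
  proof -
    have "K * \<epsilon> \<le> (K + 1) * (\<bar>A\<bar> / (2 * (K + 1)))"
      using K \<epsilon> by (intro mult_mono) (auto simp: \<epsilon>_def)
    also have "\<dots> = \<bar>A\<bar> / 2" using K by (simp add: field_simps)
    finally show ?thesis .
  qed
  have "0 < \<bar>A\<bar> * \<epsilon> / 2" using A \<epsilon> by simp
  then have "eventually (\<lambda>l. m l < \<epsilon> \<and> \<bar>\<phi> l 0\<bar> < \<bar>A\<bar> * \<epsilon> / 2) (at_right 0)"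
    using order_tendstoD(2)[OF m_lim \<epsilon>(1)] order_tendstoD(2)[OF tendsto_rabs_zero[OF \<phi>0_lim]]
    by (intro eventually_conj)
  then obtain \<delta> where \<delta>: "\<delta> > 0"
    and small: "\<And>l. 0 < l \<Longrightarrow> l < \<delta> \<Longrightarrow> m l < \<epsilon> \<and> \<bar>\<phi> l 0\<bar> < \<bar>A\<bar> * \<epsilon> / 2"
    unfolding eventually_at_right_field by auto
  have near_linear_\<epsilon>: "\<bar>\<phi> l y1 - \<phi> l y2 - A * (y1 - y2)\<bar> \<le> \<bar>A\<bar> / 2 * \<bar>y1 - y2\<bar>"
    if l: "0 < l" "l < \<delta>" and y: "\<bar>y1\<bar> \<le> \<epsilon>" "\<bar>y2\<bar> \<le> \<epsilon>" for l y1 y2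
  proof -
    have "\<bar>\<phi> l y1 - \<phi> l y2 - A * (y1 - y2)\<bar> \<le> K * \<epsilon> * \<bar>y1 - y2\<bar>"
      using small[OF l] \<epsilon> y by (intro near_linear) auto
    also have "\<dots> \<le> \<bar>A\<bar> / 2 * \<bar>y1 - y2\<bar>"
      using K\<epsilon> by (intro mult_right_mono) auto
    finally show ?thesis .
  qed
  define xp where "xp l = (THE y. \<bar>y\<bar> \<le> \<epsilon> \<and> \<phi> l y = 0)" for l
  have xp: "\<bar>xp l\<bar> \<le> \<epsilon>" "\<phi> l (xp l) = 0" "\<And>y. \<bar>y\<bar> \<le> \<epsilon> \<Longrightarrow> \<phi> l y = 0 \<Longrightarrow> y = xp l"
    if l: "0 < l" "l < \<delta>" for l
  proof -
    have ex1: "\<exists>!y. \<bar>y\<bar> \<le> \<epsilon> \<and> \<phi> l y = 0"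
      using small[OF l] continuous_on_subset[OF cont]
      by (intro quasi_linear_unique_zero[OF A] near_linear_\<epsilon>[OF l]) auto
    show "\<bar>xp l\<bar> \<le> \<epsilon>" "\<phi> l (xp l) = 0"
      using theI'[OF ex1] unfolding xp_def by auto
    show "y = xp l" if "\<bar>y\<bar> \<le> \<epsilon>" "\<phi> l y = 0" for y
      using the1_equality[OF ex1] that unfolding xp_def by auto
  qed
  have xp_le: "\<bar>xp l\<bar> \<le> 2 / \<bar>A\<bar> * \<bar>\<phi> l 0\<bar>" if l: "0 < l" "l < \<delta>" for l
  proof -
    have "\<bar>\<phi> l 0 + A * xp l\<bar> \<le> \<bar>A\<bar> / 2 * \<bar>xp l\<bar>"
      using near_linear_\<epsilon>[OF l, of "xp l" 0] xp(1,2)[OF l] \<epsilon> by (simp add: abs_minus_commute add.commute)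
    moreover have "\<bar>A * xp l\<bar> \<le> \<bar>\<phi> l 0 + A * xp l\<bar> + \<bar>\<phi> l 0\<bar>"
      by linarith
    ultimately have "\<bar>A\<bar> * \<bar>xp l\<bar> \<le> 2 * \<bar>\<phi> l 0\<bar>"
      unfolding abs_mult by linarith
    then show ?thesis
      using A by (simp add: field_simps)
  qed
  have xp_small: "\<bar>xp l\<bar> < \<epsilon>" if l: "0 < l" "l < \<delta>" for l
  proof -
    have "2 / \<bar>A\<bar> * \<bar>\<phi> l 0\<bar> < 2 / \<bar>A\<bar> * (\<bar>A\<bar> * \<epsilon> / 2)"
      using small[OF l] A by (intro mult_strict_left_mono) auto
    then show ?thesis using xp_le[OF l] A by simp
  qed
  show ?thesis
    by (rule that[OF \<epsilon> \<delta>]) (use small xp(2) xp_small xp_le in \<open>auto intro: xp(3)\<close>)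
qed

lemma perturbed_linear_family_zero_asymptotics:
  fixes \<phi> :: "real \<Rightarrow> real \<Rightarrow> real" and m c :: "real \<Rightarrow> real"
  assumes A: "A \<noteq> 0" and K: "K \<ge> 0" and h: "h > 0"
    and near_linear: "\<And>l \<rho> y1 y2. m l \<le> \<rho> \<Longrightarrow> \<rho> \<le> 1 \<Longrightarrow> \<bar>y1\<bar> \<le> \<rho> \<Longrightarrow> \<bar>y2\<bar> \<le> \<rho> \<Longrightarrow>
        \<bar>\<phi> l y1 - \<phi> l y2 - A * (y1 - y2)\<bar> \<le> K * \<rho> * \<bar>y1 - y2\<bar>"
    and at_zero: "\<And>l. m l \<le> 1 \<Longrightarrow> \<bar>\<phi> l 0 - c l\<bar> \<le> K * (m l)\<^sup>2"
    and cont: "\<And>l. continuous_on UNIV (\<phi> l)"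
    and m_nonneg: "\<And>l. 0 \<le> m l"
    and m: "m \<in> O[at_right 0](\<lambda>l. l powr h)"
    and c: "(\<lambda>l. c l - D * l powr h) \<in> O[at_right 0](\<lambda>l. l powr (2 * h))"
  shows "\<exists>\<epsilon>>0. \<exists>\<delta>>0. \<exists>xp. (\<forall>l. 0 < l \<and> l < \<delta> \<longrightarrow> \<bar>xp l\<bar> < \<epsilon> \<and> \<phi> l (xp l) = 0 \<and>
            (\<forall>y. \<bar>y\<bar> < \<epsilon> \<and> \<phi> l y = 0 \<longrightarrow> y = xp l)) \<and>
         (\<lambda>l. xp l - (- D / A) * l powr h) \<in> O[at_right 0](\<lambda>l. l powr (2 * h))"
proof -
  let ?F = "at_right (0::real)"
  define P where "P l = l powr h" for l :: real
  have P_sq: "(\<lambda>l. P l * P l) \<in> O[?F](\<lambda>l. l powr (2 * h))"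
    by (intro bigoI[where c = 1], rule eventually_mono[OF eventually_at_right_less])
      (simp add: P_def powr_add[symmetric])
  have sq_P: "(\<lambda>l. l powr (2 * h)) \<in> O[?F](P)"
    unfolding P_def using h by (intro powr_bigo_powr_at_right_0) simp
  have m_lim: "(m \<longlongrightarrow> 0) ?F"
    using bigo_tendsto_zero[OF m tendsto_powr_at_right_0[OF h]] .
  have at_zero_bigo: "(\<lambda>l. \<phi> l 0 - c l) \<in> O[?F](\<lambda>l. l powr (2 * h))"
  proof -
    have "eventually (\<lambda>l. m l < 1) ?F"
      using order_tendstoD(2)[OF m_lim] by simp
    then have "eventually (\<lambda>l. \<bar>\<phi> l 0 - c l\<bar> \<le> K * (m l * m l)) ?F"
      by eventually_elim (metis at_zero less_imp_le power2_eq_square)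
    then have "(\<lambda>l. \<phi> l 0 - c l) \<in> O[?F](\<lambda>l. m l * m l)"
      using m_nonneg by (intro bigoI[where c = K]) (auto elim!: eventually_mono)
    also have "(\<lambda>l. m l * m l) \<in> O[?F](\<lambda>l. P l * P l)"
      using m unfolding P_def by (rule landau_o.big_mult[OF _ m])
    also note P_sq
    finally show ?thesis .
  qed
  have \<phi>0: "(\<lambda>l. \<phi> l 0) \<in> O[?F](P)"
  proof -
    have "(\<lambda>l. (\<phi> l 0 - c l) + (c l - D * P l) + D * P l) \<in> O[?F](P)"
      using landau_o.big_trans[OF at_zero_bigo sq_P] landau_o.big_trans[OF c[folded P_def] sq_P]
      by (intro sum_in_bigo(1)[OF sum_in_bigo(1)]) auto
    then show ?thesis by simp
  qed
  obtain \<epsilon> \<delta> xp where \<epsilon>: "0 < \<epsilon>" "\<epsilon> \<le> 1/2" and \<delta>: "0 < \<delta>"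
    and small: "\<And>l. 0 < l \<Longrightarrow> l < \<delta> \<Longrightarrow> m l < \<epsilon>"
    and xp_small: "\<And>l. 0 < l \<Longrightarrow> l < \<delta> \<Longrightarrow> \<bar>xp l\<bar> < \<epsilon>"
    and xp_zero: "\<And>l. 0 < l \<Longrightarrow> l < \<delta> \<Longrightarrow> \<phi> l (xp l) = 0"
    and xp_unique: "\<And>l y. 0 < l \<Longrightarrow> l < \<delta> \<Longrightarrow> \<bar>y\<bar> < \<epsilon> \<Longrightarrow> \<phi> l y = 0 \<Longrightarrow> y = xp l"
    and xp_le: "\<And>l. 0 < l \<Longrightarrow> l < \<delta> \<Longrightarrow> \<bar>xp l\<bar> \<le> 2 / \<bar>A\<bar> * \<bar>\<phi> l 0\<bar>"
    using perturbed_linear_family_small_zero[where \<phi> = \<phi> and m = m, OF A K near_linear cont m_lim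
        bigo_tendsto_zero[OF \<phi>0 tendsto_powr_at_right_0[OF h, folded P_def]]]
    by blast
  have near: "eventually (\<lambda>l. 0 < l \<and> l < \<delta>) ?F"
    using \<delta> unfolding eventually_at_right_field by blast
  have xp_bigo: "xp \<in> O[?F](P)"
  proof -
    have "xp \<in> O[?F](\<lambda>l. \<phi> l 0)"
      using near by (intro bigoI[where c = "2 / \<bar>A\<bar>"]) (auto elim!: eventually_mono dest!: xp_le)
    then show ?thesis using \<phi>0 by (rule landau_o.big_trans)
  qed
  \<comment> \<open>Linearizing at scale \<open>\<rho> = m + \<bar>xp\<bar> = O(\<lambda>\<^bsup>h\<^esup>)\<close> makes \<open>A xp + \<phi>(0)\<close> quadratically small.\<close>
  have lin_err: "(\<lambda>l. \<phi> l 0 + A * xp l) \<in> O[?F](\<lambda>l. l powr (2 * h))"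
  proof -
    have "\<bar>\<phi> l 0 + A * xp l\<bar> \<le> K * ((m l + \<bar>xp l\<bar>) * \<bar>xp l\<bar>)" if l: "0 < l" "l < \<delta>" for l
    proof -
      have "\<bar>\<phi> l (xp l) - \<phi> l 0 - A * (xp l - 0)\<bar> \<le> K * (m l + \<bar>xp l\<bar>) * \<bar>xp l - 0\<bar>"
        using small[OF l] xp_small[OF l] m_nonneg[of l] \<epsilon> by (intro near_linear) auto
      then show ?thesis
        using xp_zero[OF l] by (simp add: mult.assoc abs_minus_commute)
    qed
    then have "(\<lambda>l. \<phi> l 0 + A * xp l) \<in> O[?F](\<lambda>l. (m l + \<bar>xp l\<bar>) * \<bar>xp l\<bar>)"
      using near m_nonneg by (intro bigoI[where c = K]) (auto elim!: eventually_mono)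
    also have "(\<lambda>l. (m l + \<bar>xp l\<bar>) * \<bar>xp l\<bar>) \<in> O[?F](\<lambda>l. P l * P l)"
      using m[folded P_def] xp_bigo by (intro landau_o.big_mult sum_in_bigo(1)) auto
    also note P_sq
    finally show ?thesis .
  qed
  have "(\<lambda>l. ((\<phi> l 0 + A * xp l) - (\<phi> l 0 - c l) - (c l - D * l powr h)) / A)
      \<in> O[?F](\<lambda>l. l powr (2 * h))"
    using sum_in_bigo(2)[OF sum_in_bigo(2)[OF lin_err at_zero_bigo] c] A by simp
  moreover have "((\<phi> l 0 + A * xp l) - (\<phi> l 0 - c l) - (c l - D * l powr h)) / A
      = xp l - (- D / A) * l powr h" for l
    using A by (simp add: field_simps)
  ultimately have expansion: "(\<lambda>l. xp l - (- D / A) * l powr h) \<in> O[?F](\<lambda>l. l powr (2 * h))"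
    by simp
  show ?thesis
    using \<epsilon>(1) \<delta> xp_small xp_zero xp_unique expansion by blast
qed

section \<open>The \<open>p\<close>-th bifurcation equation\<close>

lemma sum_Basis_vec_prod:
  fixes F :: "(real^'n) \<times> real \<Rightarrow> 'b::comm_monoid_add"
  shows "sum F Basis = (\<Sum>i\<in>UNIV. F (axis i 1, 0)) + F (0, 1)"
proof -
  have "inj_on (\<lambda>u. (u, 0::real)) (Basis :: (real^'n) set)" "inj_on (\<lambda>v. (0::real^'n, v)) Basis"
    by (auto intro!: inj_onI)
  then have "sum F Basis = (\<Sum>u\<in>(Basis :: (real^'n) set). F (u, 0)) + F (0, 1)"
    unfolding Basis_prod_def by (subst sum.union_disjoint) (auto simp: sum.reindex)
  also have "(\<Sum>u\<in>(Basis :: (real^'n) set). F (u, 0)) = (\<Sum>i\<in>UNIV. F (axis i 1, 0))"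
  proof -
    have inj: "inj (\<lambda>i::'n. axis i (1::real))" by (auto intro!: injI simp: axis_eq_axis)
    have B: "(Basis :: (real^'n) set) = range (\<lambda>i. axis i 1)"
      unfolding Basis_vec_def by auto
    show ?thesis
      unfolding B sum.reindex[OF inj] by simp
  qed
  finally show ?thesis .
qed

lemma inner_axis_zero: "(z :: (real^'n) \<times> real) \<bullet> (axis i 1, 0) = fst z $ i"
  by (simp add: inner_prod_def inner_axis)

lemma inner_zero_one: "(z :: (real^'n) \<times> real) \<bullet> (0, 1) = snd z"
  by (simp add: inner_prod_def)

lemma norm1_vec_prod: "norm1 (z :: (real^'n) \<times> real) = (\<Sum>i\<in>UNIV. \<bar>fst z $ i\<bar>) + \<bar>snd z\<bar>"
  unfolding norm1_def sum_Basis_vec_prod by (simp add: inner_axis_zero inner_zero_one)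

lemma diff_at_0_uncurry:
  fixes f :: "real^'s \<Rightarrow> real \<Rightarrow> real"
  shows "diff_at_0 (\<lambda>z. f (fst z) (snd z)) z = (\<Sum>i\<in>UNIV. fst z $ i * acoef f i) + snd z * lcoef f"
proof -
  have "t *\<^sub>R axis i (1::real) = axis i t" for t and i :: 's
    by (simp add: axis_def vec_eq_iff)
  then show ?thesis
    unfolding diff_at_0_def sum_Basis_vec_prod
    by (simp add: inner_axis_zero inner_zero_one acoef_def lcoef_def)
qed

lemma cube_vec_prod:
  "(z :: (real^'n) \<times> real) \<in> cube \<rho> \<longleftrightarrow> (\<forall>i. \<bar>fst z $ i\<bar> \<le> \<rho>) \<and> \<bar>snd z\<bar> \<le> \<rho>"
proof -
  have B: "(Basis :: ((real^'n) \<times> real) set) = insert (0, 1) (range (\<lambda>i. (axis i 1, 0)))"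
    unfolding Basis_prod_def Basis_vec_def by auto
  show ?thesis
    unfolding cube_def B by (auto simp: inner_axis_zero inner_zero_one)
qed

definition cell_input :: "('s::finite \<Rightarrow> 'c \<Rightarrow> 'c) \<Rightarrow> ('c \<Rightarrow> real \<Rightarrow> real) \<Rightarrow> 'c \<Rightarrow> real \<Rightarrow> real
    \<Rightarrow> (real^'s) \<times> real" where
  "cell_input sig x p l y = ((\<chi> s. if sig s p = p then y else x (sig s p) l), l)"

definition linear_drive :: "('s::finite \<Rightarrow> 'c \<Rightarrow> 'c) \<Rightarrow> (real^'s \<Rightarrow> real \<Rightarrow> real) \<Rightarrow> ('c \<Rightarrow> real \<Rightarrow> real)
    \<Rightarrow> 'c \<Rightarrow> real \<Rightarrow> real" where
  "linear_drive sig f x p l = (\<Sum>t\<in>- Lp sig p. acoef f t * x (sig t p) l) + lcoef f * l"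

lemma gamma_eq_cell_input:
  "gamma sig f ((\<lambda>q. x q l)(p := y)) l p = f (fst (cell_input sig x p l y)) (snd (cell_input sig x p l y))"
  unfolding gamma_def cell_input_def by (simp add: fun_upd_def)

lemma sum_if_Lp:
  fixes F G :: "'s::finite \<Rightarrow> 'a::comm_monoid_add"
  shows "(\<Sum>s\<in>UNIV. if sig s p = p then F s else G s) = sum F (Lp sig p) + sum G (- Lp sig p)"
  by (simp add: sum.If_cases Lp_def Compl_eq)

lemma norm1_cell_input_minus:
  "norm1 (cell_input sig x p l y1 - cell_input sig x p l y2) = real (card (Lp sig p)) * \<bar>y1 - y2\<bar>"
proof -
  have "norm1 (cell_input sig x p l y1 - cell_input sig x p l y2)
      = (\<Sum>s\<in>UNIV. if sig s p = p then \<bar>y1 - y2\<bar> else 0)"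
    unfolding norm1_vec_prod cell_input_def by (simp, intro sum.cong) auto
  also have "\<dots> = real (card (Lp sig p)) * \<bar>y1 - y2\<bar>"
    unfolding sum_if_Lp[of sig p] by simp
  finally show ?thesis .
qed

lemma norm1_cell_input: "norm1 (cell_input sig x p l 0) = \<bar>l\<bar> + (\<Sum>t\<in>- Lp sig p. \<bar>x (sig t p) l\<bar>)"
proof -
  have "norm1 (cell_input sig x p l 0) = (\<Sum>s\<in>UNIV. if sig s p = p then 0 else \<bar>x (sig s p) l\<bar>) + \<bar>l\<bar>"
    unfolding norm1_vec_prod cell_input_def by (simp add: if_distrib[of abs] cong: if_cong)
  then show ?thesis unfolding sum_if_Lp[of sig p] by simp
qed

lemma cell_input_in_cube:
  assumes "norm1 (cell_input sig x p l 0) \<le> \<rho>" "\<bar>y\<bar> \<le> \<rho>"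
  shows "cell_input sig x p l y \<in> cube \<rho>"
proof -
  have neighbours: "\<bar>if sig s p = p then 0 else x (sig s p) l\<bar> \<le> \<rho>" and l: "\<bar>l\<bar> \<le> \<rho>" for s
    using in_cube_if_norm1_le[OF assms(1)] by (simp_all add: cube_vec_prod cell_input_def)
  show ?thesis
    unfolding cube_vec_prod cell_input_def fst_conv snd_conv vec_lambda_beta
  proof (intro conjI allI l)
    show "\<bar>if sig s p = p then y else x (sig s p) l\<bar> \<le> \<rho>" for s
      using neighbours[of s] assms(2) by (cases "sig s p = p") auto
  qed
qed

lemma diff_at_0_cell_input:
  "diff_at_0 (\<lambda>z. f (fst z) (snd z)) (cell_input sig x p l y)
     = linear_drive sig f x p l + (\<Sum>s\<in>Lp sig p. acoef f s) * y"
proof -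
  have "diff_at_0 (\<lambda>z. f (fst z) (snd z)) (cell_input sig x p l y)
      = (\<Sum>s\<in>UNIV. if sig s p = p then y * acoef f s else x (sig s p) l * acoef f s) + l * lcoef f"
    unfolding diff_at_0_uncurry cell_input_def by (simp add: if_distrib[of "\<lambda>v. v * _"] cong: if_cong)
  then show ?thesis
    unfolding sum_if_Lp[of sig p] by (simp add: linear_drive_def sum_distrib_left algebra_simps)
qed

lemma cell_equation_linearization:
  fixes f :: "real^'s::finite \<Rightarrow> real \<Rightarrow> real" and sig :: "'s \<Rightarrow> 'c \<Rightarrow> 'c"
  assumes smooth: "smooth_fun (\<lambda>z. f (fst z) (snd z))" and f00: "f 0 0 = 0"
  obtains K where "K \<ge> 0"
    and "\<And>l \<rho> y1 y2. norm1 (cell_input sig x p l 0) \<le> \<rho> \<Longrightarrow> \<rho> \<le> 1 \<Longrightarrow> \<bar>y1\<bar> \<le> \<rho> \<Longrightarrow> \<bar>y2\<bar> \<le> \<rho> \<Longrightarrow>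
        \<bar>gamma sig f ((\<lambda>q. x q l)(p := y1)) l p - gamma sig f ((\<lambda>q. x q l)(p := y2)) l p
          - (\<Sum>s\<in>Lp sig p. acoef f s) * (y1 - y2)\<bar> \<le> K * \<rho> * \<bar>y1 - y2\<bar>"
    and "\<And>l. norm1 (cell_input sig x p l 0) \<le> 1 \<Longrightarrow>
        \<bar>gamma sig f ((\<lambda>q. x q l)(p := 0)) l p - linear_drive sig f x p l\<bar>
          \<le> K * (norm1 (cell_input sig x p l 0))\<^sup>2"
proof -
  define g where "g z = f (fst z) (snd z)" for z :: "(real^'s) \<times> real"
  define A where "A = (\<Sum>s\<in>Lp sig p. acoef f s)"
  define n where "n = real (card (Lp sig p))"
  obtain K where K: "K \<ge> 0" and err: "\<And>\<rho> u v. \<rho> \<le> 1 \<Longrightarrow> u \<in> cube \<rho> \<Longrightarrow> v \<in> cube \<rho> \<Longrightarrow>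
      \<bar>(g u - diff_at_0 g u) - (g v - diff_at_0 g v)\<bar> \<le> K * \<rho> * norm1 (u - v)"
    using smooth_fun_linearization_error[OF smooth[folded g_def]] by blast
  have gamma: "gamma sig f ((\<lambda>q. x q l)(p := y)) l p
      = (g (cell_input sig x p l y) - diff_at_0 g (cell_input sig x p l y)) + linear_drive sig f x p l + A * y"
    for l y
    unfolding gamma_eq_cell_input g_def diff_at_0_cell_input A_def by simp
  show ?thesis
  proof (rule that[of "K * (n + 1)"])
    show "K * (n + 1) \<ge> 0" using K by (simp add: n_def)
  next
    fix l \<rho> y1 y2 assume \<rho>: "norm1 (cell_input sig x p l 0) \<le> \<rho>" "\<rho> \<le> 1" and y: "\<bar>y1\<bar> \<le> \<rho>" "\<bar>y2\<bar> \<le> \<rho>"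
    have "0 \<le> \<rho>" using \<rho>(1) norm1_nonneg order_trans by blast
    then have "K * \<rho> * (n * \<bar>y1 - y2\<bar>) \<le> K * (n + 1) * \<rho> * \<bar>y1 - y2\<bar>"
      using K by (simp add: mult_left_mono mult_right_mono algebra_simps)
    then show "\<bar>gamma sig f ((\<lambda>q. x q l)(p := y1)) l p - gamma sig f ((\<lambda>q. x q l)(p := y2)) l p
        - (\<Sum>s\<in>Lp sig p. acoef f s) * (y1 - y2)\<bar> \<le> K * (n + 1) * \<rho> * \<bar>y1 - y2\<bar>"
      using err[OF \<rho>(2) cell_input_in_cube[OF \<rho>(1) y(1)] cell_input_in_cube[OF \<rho>(1) y(2)]]
      unfolding gamma norm1_cell_input_minus A_def n_def[symmetric] by (simp add: algebra_simps)
  next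
    fix l assume m: "norm1 (cell_input sig x p l 0) \<le> 1"
    define \<mu> where "\<mu> = norm1 (cell_input sig x p l 0)"
    have "0 \<in> cube \<mu>"
      using norm1_nonneg[of "cell_input sig x p l 0"] by (simp add: cube_def \<mu>_def)
    moreover have "cell_input sig x p l 0 \<in> cube \<mu>"
      using norm1_nonneg[of "cell_input sig x p l 0"] unfolding \<mu>_def by (intro cell_input_in_cube) auto
    ultimately have "\<bar>(g (cell_input sig x p l 0) - diff_at_0 g (cell_input sig x p l 0)) - (g 0 - diff_at_0 g 0)\<bar>
        \<le> K * \<mu> * norm1 (cell_input sig x p l 0 - 0)"
      using m unfolding \<mu>_def[symmetric] by (intro err)
    then have "\<bar>g (cell_input sig x p l 0) - diff_at_0 g (cell_input sig x p l 0)\<bar> \<le> K * \<mu> * \<mu>"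
      using f00 by (simp add: g_def \<mu>_def)
    also have "\<dots> \<le> K * (n + 1) * \<mu>\<^sup>2"
      using K norm1_nonneg[of "cell_input sig x p l 0"]
      by (simp add: \<mu>_def n_def power2_eq_square mult_right_mono algebra_simps)
    finally show "\<bar>gamma sig f ((\<lambda>q. x q l)(p := 0)) l p - linear_drive sig f x p l\<bar>
        \<le> K * (n + 1) * (norm1 (cell_input sig x p l 0))\<^sup>2"
      unfolding gamma \<mu>_def by simp
  qed
qed

lemma continuous_on_gamma_update:
  fixes f :: "real^'s::finite \<Rightarrow> real \<Rightarrow> real" and sig :: "'s \<Rightarrow> 'c \<Rightarrow> 'c"
  assumes "smooth_fun (\<lambda>z. f (fst z) (snd z))"
  shows "continuous_on UNIV (\<lambda>y. gamma sig f ((\<lambda>q. x q l)(p := y)) l p)"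
proof -
  define e where "e = ((\<chi> s. if sig s p = p then 1 else 0) :: real^'s, 0 :: real)"
  have affine: "cell_input sig x p l = (\<lambda>y. cell_input sig x p l 0 + y *\<^sub>R e)"
    by (rule ext) (simp add: cell_input_def e_def vec_eq_iff)
  have "continuous_on UNIV (cell_input sig x p l)"
    by (subst affine) (intro continuous_intros)
  moreover have "continuous_on UNIV (\<lambda>z. f (fst z) (snd z))"
    using assms unfolding smooth_fun_def by blast
  ultimately have "continuous_on UNIV ((\<lambda>z. f (fst z) (snd z)) \<circ> cell_input sig x p l)"
    by (rule continuous_on_compose[OF _ continuous_on_subset]) simp
  then show ?thesis
    unfolding gamma_eq_cell_input o_def .
qed

section \<open>Asymptotics of the drive from the other cells\<close>

lemma id_bigo_powr_at_right_0: "e \<le> 1 \<Longrightarrow> (\<lambda>l::real. l) \<in> O[at_right 0](\<lambda>l. l powr e)"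
  using powr_bigo_powr_at_right_0[of e 1] by simp

lemma two_powr_neg_nat_le:
  fixes m n :: nat
  shows "m \<le> n \<Longrightarrow> 2 powr - real n \<le> 2 powr - real m"
    and "m < n \<Longrightarrow> 2 * 2 powr - real n \<le> 2 powr - real m"
proof -
  show "m \<le> n \<Longrightarrow> 2 powr - real n \<le> 2 powr - real m" by simp
  assume "m < n"
  moreover have "2 * 2 powr - real n = 2 powr (1 - real n)"
    by (simp add: powr_diff powr_minus divide_simps)
  ultimately show "2 * 2 powr - real n \<le> 2 powr - real m" by simp
qed

lemma has_expansion_iff:
  "has_expansion x d \<xi> \<longleftrightarrow>
     (\<lambda>l. x l - d * l powr (2 powr - real \<xi>)) \<in> O[at_right 0](\<lambda>l. l powr (2 * 2 powr - real \<xi>))"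
proof -
  have exponent: "2 powr (- (real \<xi> - 1)) = 2 * 2 powr - real \<xi>"
    by (simp add: powr_diff powr_minus divide_simps)
  have abs_powr: "O[at_right 0](\<lambda>l::real. \<bar>l\<bar> powr e) = O[at_right 0](\<lambda>l. l powr e)" for e
    by (rule landau_o.big.cong, rule eventually_mono[OF eventually_at_right_less]) simp
  show ?thesis
    unfolding has_expansion_def exponent abs_powr ..
qed

lemma has_expansion_bigo:
  assumes x: "has_expansion x d \<xi>" and e: "e \<le> 2 powr - real \<xi>"
  shows "x \<in> O[at_right 0](\<lambda>l. l powr e)"
proof -
  define h where "h = 2 powr - real \<xi>"
  have "0 < h" by (simp add: h_def)
  then have "(\<lambda>l. l powr (2 * h)) \<in> O[at_right 0](\<lambda>l. l powr e)"
    using e unfolding h_def by (intro powr_bigo_powr_at_right_0) linarith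
  with x have "(\<lambda>l. x l - d * l powr h) \<in> O[at_right 0](\<lambda>l. l powr e)"
    unfolding has_expansion_iff h_def[symmetric] by (rule landau_o.big_trans)
  moreover have "(\<lambda>l. d * l powr h) \<in> O[at_right 0](\<lambda>l. l powr e)"
    using powr_bigo_powr_at_right_0[OF e] by (simp add: h_def)
  ultimately have "(\<lambda>l. (x l - d * l powr h) + d * l powr h) \<in> O[at_right 0](\<lambda>l. l powr e)"
    by (rule sum_in_bigo(1))
  then show ?thesis by simp
qed

lemma above_if_sig_neq:
  assumes "sig s p \<noteq> p"
  shows "above sig (sig s p) p"
proof -
  have "(sig s p, p) \<in> edges sig"
    unfolding edges_def using assms by blast
  then show ?thesis
    unfolding above_def below_def using assms by (simp add: r_into_rtrancl)
qed

lemma xi_le_Xi: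
  fixes sig :: "'s \<Rightarrow> 'c::finite \<Rightarrow> 'c"
  shows "sig s p \<noteq> p \<Longrightarrow> \<xi> (sig s p) \<le> Xi sig \<xi> p"
  unfolding Xi_def Sig_star_def Sig_img_def by (intro Max_ge imageI) (simp_all, blast)

lemma sig_in_Qset_iff: "sig s p \<in> Qset sig \<xi> p \<longleftrightarrow> sig s p \<noteq> p \<and> \<xi> (sig s p) = Xi sig \<xi> p"
  unfolding Qset_def Sig_star_def Sig_img_def by auto

lemma hyp_H_neighbour:
  "hyp_H sig p x d \<xi> \<Longrightarrow> sig s p \<noteq> p \<Longrightarrow> has_expansion (x (sig s p)) (d (sig s p)) (\<xi> (sig s p))"
  unfolding hyp_H_def by (simp add: above_if_sig_neq)

lemma norm1_cell_input_bigo: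
  fixes sig :: "'s::finite \<Rightarrow> 'c::finite \<Rightarrow> 'c"
  assumes H: "hyp_H sig p x d \<xi>"
  shows "(\<lambda>l. norm1 (cell_input sig x p l 0)) \<in> O[at_right 0](\<lambda>l. l powr (2 powr - real (Xi sig \<xi> p)))"
proof -
  let ?h = "2 powr - real (Xi sig \<xi> p)"
  have "(\<lambda>l. \<bar>l\<bar>) \<in> O[at_right 0](\<lambda>l. l powr ?h)"
    using id_bigo_powr_at_right_0 two_powr_neg_nat_le(1)[of 0 "Xi sig \<xi> p"] by simp
  moreover have "(\<lambda>l. \<bar>x (sig t p) l\<bar>) \<in> O[at_right 0](\<lambda>l. l powr ?h)" if "t \<in> - Lp sig p" for t
  proof -
    have "x (sig t p) \<in> O[at_right 0](\<lambda>l. l powr ?h)"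
      using that by (intro has_expansion_bigo[OF hyp_H_neighbour[OF H]] two_powr_neg_nat_le xi_le_Xi)
        (auto simp: Lp_def)
    then show ?thesis by simp
  qed
  ultimately have "(\<lambda>l. \<bar>l\<bar> + (\<Sum>t\<in>- Lp sig p. \<bar>x (sig t p) l\<bar>)) \<in> O[at_right 0](\<lambda>l. l powr ?h)"
    by (rule sum_in_bigo(1)[OF _ big_sum_in_bigo])
  then show ?thesis by (simp only: norm1_cell_input)
qed

definition leading_drive :: "('s::finite \<Rightarrow> 'c \<Rightarrow> 'c) \<Rightarrow> (real^'s \<Rightarrow> real \<Rightarrow> real) \<Rightarrow> ('c \<Rightarrow> real)
    \<Rightarrow> ('c \<Rightarrow> nat) \<Rightarrow> 'c \<Rightarrow> real" where
  "leading_drive sig f d \<xi> p = (\<Sum>t\<in>{t. sig t p \<in> Qset sig \<xi> p}. acoef f t * d (sig t p))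
     + (if Xi sig \<xi> p = 0 then lcoef f else 0)"

lemma neighbour_deviation_bigo:
  fixes sig :: "'s::finite \<Rightarrow> 'c::finite \<Rightarrow> 'c"
  assumes H: "hyp_H sig p x d \<xi>" and t: "sig t p \<noteq> p"
  defines "h \<equiv> 2 powr - real (Xi sig \<xi> p)"
  shows "(\<lambda>l. x (sig t p) l - (if sig t p \<in> Qset sig \<xi> p then d (sig t p) * l powr h else 0))
           \<in> O[at_right 0](\<lambda>l. l powr (2 * h))"
proof (cases "sig t p \<in> Qset sig \<xi> p")
  case True
  then show ?thesis
    using hyp_H_neighbour[OF H t] unfolding has_expansion_iff h_def
    by (simp add: sig_in_Qset_iff)
next
  case False
  with t have "\<xi> (sig t p) < Xi sig \<xi> p"
    using xi_le_Xi[of sig t p \<xi>] by (auto simp: sig_in_Qset_iff)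
  then have "x (sig t p) \<in> O[at_right 0](\<lambda>l. l powr (2 * h))"
    unfolding h_def by (intro has_expansion_bigo[OF hyp_H_neighbour[OF H t]] two_powr_neg_nat_le)
  then show ?thesis
    using False by simp
qed

lemma parameter_deviation_bigo:
  fixes n :: nat
  defines "h \<equiv> 2 powr - real n"
  shows "(\<lambda>l. l - (if n = 0 then l powr h else 0)) \<in> O[at_right 0](\<lambda>l. l powr (2 * h))"
proof (cases "n = 0")
  case True
  then have "eventually (\<lambda>l::real. l - (if n = 0 then l powr h else 0) = 0) (at_right 0)"
    by (intro eventually_mono[OF eventually_at_right_less]) (simp add: h_def)
  then show ?thesis
    by (rule landau_o.big.in_cong[THEN iffD2, OF _ zero_in_bigo])
next
  case False
  then have "2 * h \<le> 1"
    using two_powr_neg_nat_le(2)[of 0 n] by (simp add: h_def)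
  then show ?thesis
    using False by (simp add: id_bigo_powr_at_right_0)
qed

lemma linear_drive_expansion:
  fixes sig :: "'s::finite \<Rightarrow> 'c::finite \<Rightarrow> 'c"
  assumes H: "hyp_H sig p x d \<xi>"
  defines "h \<equiv> 2 powr - real (Xi sig \<xi> p)"
  shows "(\<lambda>l. linear_drive sig f x p l - leading_drive sig f d \<xi> p * l powr h)
           \<in> O[at_right 0](\<lambda>l. l powr (2 * h))"
proof -
  let ?Q = "Qset sig \<xi> p"
  define err where "err t l = x (sig t p) l - (if sig t p \<in> ?Q then d (sig t p) * l powr h else 0)" for t l
  have Q_sub: "{t. sig t p \<in> ?Q} = {t \<in> - Lp sig p. sig t p \<in> ?Q}"
    by (auto simp: sig_in_Qset_iff Lp_def)
  have leading_sum: "(\<Sum>t\<in>{t. sig t p \<in> ?Q}. acoef f t * d (sig t p)) * l powr h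
      = (\<Sum>t\<in>- Lp sig p. acoef f t * (if sig t p \<in> ?Q then d (sig t p) * l powr h else 0))" for l
    unfolding Q_sub sum.inter_filter[OF finite] sum_distrib_right by (intro sum.cong) auto
  have parameter_term: "(if Xi sig \<xi> p = 0 then lcoef f else 0) * l powr h
      = lcoef f * (if Xi sig \<xi> p = 0 then l powr h else 0)" for l
    by simp
  have "linear_drive sig f x p l - leading_drive sig f d \<xi> p * l powr h
      = ((\<Sum>t\<in>- Lp sig p. acoef f t * x (sig t p) l)
         - (\<Sum>t\<in>- Lp sig p. acoef f t * (if sig t p \<in> ?Q then d (sig t p) * l powr h else 0)))
        + lcoef f * (l - (if Xi sig \<xi> p = 0 then l powr h else 0))" for l
    unfolding linear_drive_def leading_drive_def distrib_right leading_sum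
      right_diff_distrib[of "lcoef f"]
    using parameter_term[of l] by linarith
  also have "(\<Sum>t\<in>- Lp sig p. acoef f t * x (sig t p) l)
      - (\<Sum>t\<in>- Lp sig p. acoef f t * (if sig t p \<in> ?Q then d (sig t p) * l powr h else 0))
      = (\<Sum>t\<in>- Lp sig p. acoef f t * err t l)" for l
    unfolding err_def right_diff_distrib by (rule sum_subtractf[symmetric])
  finally have decomposition: "linear_drive sig f x p l - leading_drive sig f d \<xi> p * l powr h
      = (\<Sum>t\<in>- Lp sig p. acoef f t * err t l) + lcoef f * (l - (if Xi sig \<xi> p = 0 then l powr h else 0))"
    for l .
  have "(\<lambda>l. acoef f t * err t l) \<in> O[at_right 0](\<lambda>l. l powr (2 * h))" if "t \<in> - Lp sig p" for t
    using neighbour_deviation_bigo[OF H, of t] that unfolding err_def h_def by (simp add: Lp_def)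
  moreover have "(\<lambda>l. lcoef f * (l - (if Xi sig \<xi> p = 0 then l powr h else 0)))
      \<in> O[at_right 0](\<lambda>l. l powr (2 * h))"
    using parameter_deviation_bigo[of "Xi sig \<xi> p"] unfolding h_def by simp
  ultimately have "(\<lambda>l. (\<Sum>t\<in>- Lp sig p. acoef f t * err t l)
      + lcoef f * (l - (if Xi sig \<xi> p = 0 then l powr h else 0))) \<in> O[at_right 0](\<lambda>l. l powr (2 * h))"
    by (rule sum_in_bigo(1)[OF big_sum_in_bigo])
  then show ?thesis
    unfolding decomposition .
qed

lemma leading_drive_cases:
  fixes sig :: "'s::finite \<Rightarrow> 'c::finite \<Rightarrow> 'c"
  shows "leading_drive sig f d \<xi> p =
    (if Xi sig \<xi> p = 0 then (\<Sum>t\<in>- Lp sig p. acoef f t * d (sig t p)) + lcoef f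
     else (\<Sum>t\<in>{t. sig t p \<in> Qset sig \<xi> p}. acoef f t * d (sig t p)))"
proof -
  have "{t. sig t p \<in> Qset sig \<xi> p} = - Lp sig p" if "Xi sig \<xi> p = 0"
    using that xi_le_Xi[of sig _ p \<xi>] by (auto simp: sig_in_Qset_iff Lp_def)
  then show ?thesis by (simp add: leading_drive_def)
qed

lemma leading_drive_nonzero:
  fixes sig :: "'s::finite \<Rightarrow> 'c::finite \<Rightarrow> 'c"
  assumes "Xi sig \<xi> p = 0 \<Longrightarrow> cond_L sig f d \<xi> p" and "Xi sig \<xi> p > 0 \<Longrightarrow> cond_SN sig f d \<xi> p"
  shows "leading_drive sig f d \<xi> p \<noteq> 0"
  using assms unfolding leading_drive_cases cond_L_def cond_SN_def by (cases "Xi sig \<xi> p = 0") auto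

lemma cell_equation_small_solution:
  fixes sig :: "'s::finite \<Rightarrow> 'c::finite \<Rightarrow> 'c" and f :: "real^'s \<Rightarrow> real \<Rightarrow> real"
  assumes smooth: "smooth_fun (\<lambda>z. f (fst z) (snd z))" and f00: "f 0 0 = 0"
    and A: "(\<Sum>s\<in>Lp sig p. acoef f s) \<noteq> 0" and H: "hyp_H sig p x d \<xi>"
  shows "\<exists>\<epsilon>>0. \<exists>\<delta>>0. \<exists>xp. (\<forall>l. 0 < l \<and> l < \<delta> \<longrightarrow> \<bar>xp l\<bar> < \<epsilon> \<and>
            gamma sig f ((\<lambda>q. x q l)(p := xp l)) l p = 0 \<and>
            (\<forall>y. \<bar>y\<bar> < \<epsilon> \<and> gamma sig f ((\<lambda>q. x q l)(p := y)) l p = 0 \<longrightarrow> y = xp l)) \<and>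
         has_expansion xp (- leading_drive sig f d \<xi> p / (\<Sum>s\<in>Lp sig p. acoef f s)) (Xi sig \<xi> p)"
proof -
  obtain K where K: "K \<ge> 0"
    and near_linear: "\<And>l \<rho> y1 y2. norm1 (cell_input sig x p l 0) \<le> \<rho> \<Longrightarrow> \<rho> \<le> 1 \<Longrightarrow> \<bar>y1\<bar> \<le> \<rho> \<Longrightarrow> \<bar>y2\<bar> \<le> \<rho> \<Longrightarrow>
        \<bar>gamma sig f ((\<lambda>q. x q l)(p := y1)) l p - gamma sig f ((\<lambda>q. x q l)(p := y2)) l p
          - (\<Sum>s\<in>Lp sig p. acoef f s) * (y1 - y2)\<bar> \<le> K * \<rho> * \<bar>y1 - y2\<bar>"
    and at_zero: "\<And>l. norm1 (cell_input sig x p l 0) \<le> 1 \<Longrightarrow>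
        \<bar>gamma sig f ((\<lambda>q. x q l)(p := 0)) l p - linear_drive sig f x p l\<bar>
          \<le> K * (norm1 (cell_input sig x p l 0))\<^sup>2"
    using cell_equation_linearization[OF smooth f00, where sig = sig and x = x and p = p] by blast
  have h: "0 < 2 powr - real (Xi sig \<xi> p)" by simp
  show ?thesis
    using perturbed_linear_family_zero_asymptotics[OF A K h near_linear at_zero
        continuous_on_gamma_update[OF smooth, where sig = sig and x = x and p = p] norm1_nonneg
        norm1_cell_input_bigo[OF H] linear_drive_expansion[OF H, where f = f]]
    unfolding has_expansion_iff .
qed

theorem lemma4p17:
  fixes sig :: "'s::finite \<Rightarrow> 'c::finite \<Rightarrow> 'c"
    and f :: "real^'s \<Rightarrow> real \<Rightarrow> real"
    and B :: "'c set" and p :: 'c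
    and x :: "'c \<Rightarrow> real \<Rightarrow> real" and d :: "'c \<Rightarrow> real" and \<xi> :: "'c \<Rightarrow> nat"
  assumes net: "network sig" and ff: "feedforward sig"
    and smooth: "smooth_fun (\<lambda>z. f (fst z) (snd z))"
    and B_assm: "assumption_B sig f"
    and max_noncrit: "\<forall>q. maximal sig q \<longrightarrow> \<not> critical sig f q"
    and root: "root_subnetwork sig f B"
    and pB: "p \<notin> B" and p_nonmax: "\<not> maximal sig p" and p_noncrit: "\<not> critical sig f p"
    and H: "hyp_H sig p x d \<xi>"
    and L: "Xi sig \<xi> p = 0 \<Longrightarrow> cond_L sig f d \<xi> p"
    and SN: "Xi sig \<xi> p > 0 \<Longrightarrow> cond_SN sig f d \<xi> p"
  shows "let dp = (if Xi sig \<xi> p = 0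
                   then - ((\<Sum>t\<in>- Lp sig p. acoef f t * d (sig t p)) + lcoef f)
                          / (\<Sum>s\<in>Lp sig p. acoef f s)
                   else - (\<Sum>t\<in>{t. sig t p \<in> Qset sig \<xi> p}. acoef f t * d (sig t p))
                          / (\<Sum>s\<in>Lp sig p. acoef f s))
         in dp \<noteq> 0 \<and>
            (\<exists>\<epsilon>>0. \<exists>\<delta>>0. \<exists>xp :: real \<Rightarrow> real.
               (\<forall>lam. 0 < lam \<and> lam < \<delta> \<longrightarrow>
                  \<bar>xp lam\<bar> < \<epsilon> \<and>
                  gamma sig f ((\<lambda>q. x q lam)(p := xp lam)) lam p = 0 \<and>
                  (\<forall>y. \<bar>y\<bar> < \<epsilon> \<and> gamma sig f ((\<lambda>q. x q lam)(p := y)) lam p = 0 \<longrightarrow> y = xp lam)) \<and>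
               has_expansion xp dp (Xi sig \<xi> p))"
proof -
  \<comment> \<open>The global hypotheses on the network, on \<open>B\<close> and on the position of \<open>p\<close> are what makes
    (H) available inductively in the paper; once (H) is assumed, the argument is local to \<open>p\<close>.\<close>
  let ?A = "\<Sum>s\<in>Lp sig p. acoef f s"
  let ?D = "leading_drive sig f d \<xi> p"
  have A: "?A \<noteq> 0" using p_noncrit by (simp add: critical_def)
  have f00: "f 0 0 = 0" using B_assm by (simp add: assumption_B_def)
  have "(if Xi sig \<xi> p = 0 then - ((\<Sum>t\<in>- Lp sig p. acoef f t * d (sig t p)) + lcoef f) / ?A
      else - (\<Sum>t\<in>{t. sig t p \<in> Qset sig \<xi> p}. acoef f t * d (sig t p)) / ?A) = - ?D / ?A"
    using A by (simp add: leading_drive_cases field_simps)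
  moreover have "- ?D / ?A \<noteq> 0"
    using A leading_drive_nonzero[OF L SN] by simp
  ultimately show ?thesis
    unfolding Let_def using cell_equation_small_solution[OF smooth f00 A H] by presburger
qed

end
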